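(* Let $n\geq 2$ be finite, let $\mathfrak{A}\in TA_n$ be countable, let $a\in A$ be nonzero and let $X\subseteq A$ satisfy $\prod X=0$ in $\mathfrak A$. Then there exist a permutable set $V$ (one may take $V=S_n$, the set of permutations of $n$) and a homomorphism $h:\mathfrak{A}\to\wp(V)$ such that $h(a)\neq\emptyset$ and $\bigcap_{x\in X}h(x)=\emptyset$.
   Context: $TA_n=\mathbf{Mod}(\Sigma_n)$, where $\Sigma_n$ consists of the Boolean algebra axioms, the equations saying each $s_{ij}$ ($i\neq j<n$) is a Boolean endomorphism, and $t_1(x)=t_2(x)$ for all words $t_1,t_2$ in the $s_{ij}$ whose associated compositions of transpositions $[i,j]$ coincide in $S_n$. A set $V\subseteq{}^nU$ is permutable if $s\circ[i,j]\in V$ whenever $s\in V$, $i\neq j<n$. $\wp(V)=\langle\mathcal P(V);\cap,-,S_{ij}\rangle$ with complement relative to $V$ and $S_{ij}(Y)=\{q\in V:q\circ[i,j]\in Y\}$. *)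

theory Defs
  imports "HOL-Combinatorics.Transposition" "HOL-Library.FuncSet" "HOL-Library.Countable_Set"
begin

(* Boolean algebra axioms for <A; meet, compl>: the (dual) Huntington axiomatisation
   (commutativity, associativity, Huntington's axiom), which axiomatises Boolean algebras. *)
definition boolean_alg :: "'a set \<Rightarrow> ('a \<Rightarrow> 'a \<Rightarrow> 'a) \<Rightarrow> ('a \<Rightarrow> 'a) \<Rightarrow> bool" where
  "boolean_alg A meet compl \<longleftrightarrow>
     A \<noteq> {} \<and>
     (\<forall>x\<in>A. \<forall>y\<in>A. meet x y \<in> A) \<and>
     (\<forall>x\<in>A. compl x \<in> A) \<and>
     (\<forall>x\<in>A. \<forall>y\<in>A. meet x y = meet y x) \<and>
     (\<forall>x\<in>A. \<forall>y\<in>A. \<forall>z\<in>A. meet (meet x y) z = meet x (meet y z)) \<and>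
     (\<forall>x\<in>A. \<forall>y\<in>A. meet (compl (meet (compl x) y)) (compl (meet (compl x) (compl y))) = x)"

definition ba_zero :: "'a set \<Rightarrow> ('a \<Rightarrow> 'a \<Rightarrow> 'a) \<Rightarrow> ('a \<Rightarrow> 'a) \<Rightarrow> 'a" where
  "ba_zero A meet compl = (SOME z. \<exists>x\<in>A. z = meet x (compl x))"

definition ba_le :: "('a \<Rightarrow> 'a \<Rightarrow> 'a) \<Rightarrow> 'a \<Rightarrow> 'a \<Rightarrow> bool" where
  "ba_le meet x y \<longleftrightarrow> meet x y = x"

(* "prod X = 0": the infimum of X in the algebra exists and equals 0, i.e. 0 is the only
   lower bound of X in A (0 is always a lower bound). *)
definition inf_is_zero :: "'a set \<Rightarrow> ('a \<Rightarrow> 'a \<Rightarrow> 'a) \<Rightarrow> ('a \<Rightarrow> 'a) \<Rightarrow> 'a set \<Rightarrow> bool" where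
  "inf_is_zero A meet compl X \<longleftrightarrow>
     (\<forall>b\<in>A. (\<forall>x\<in>X. ba_le meet b x) \<longrightarrow> b = ba_zero A meet compl)"

(* words in the s_ij, encoded as lists of index pairs; the word [(i1,j1),...,(ik,jk)]
   denotes s_{i1 j1}(...(s_{ik jk} x)) *)
definition valid_word :: "nat \<Rightarrow> (nat \<times> nat) list \<Rightarrow> bool" where
  "valid_word n w \<longleftrightarrow> (\<forall>(i,j)\<in>set w. i \<noteq> j \<and> i < n \<and> j < n)"

definition word_app :: "(nat \<Rightarrow> nat \<Rightarrow> 'a \<Rightarrow> 'a) \<Rightarrow> (nat \<times> nat) list \<Rightarrow> 'a \<Rightarrow> 'a" where
  "word_app s w x = foldr (\<lambda>(i,j) y. s i j y) w x"

definition word_perm :: "(nat \<times> nat) list \<Rightarrow> nat \<Rightarrow> nat" where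
  "word_perm w = foldr (\<lambda>(i,j) p. transpose i j \<circ> p) w id"

definition TA :: "nat \<Rightarrow> 'a set \<Rightarrow> ('a \<Rightarrow> 'a \<Rightarrow> 'a) \<Rightarrow> ('a \<Rightarrow> 'a) \<Rightarrow> (nat \<Rightarrow> nat \<Rightarrow> 'a \<Rightarrow> 'a) \<Rightarrow> bool" where
  "TA n A meet compl s \<longleftrightarrow>
     boolean_alg A meet compl \<and>
     (\<forall>i<n. \<forall>j<n. i \<noteq> j \<longrightarrow>
        (\<forall>x\<in>A. s i j x \<in> A) \<and>
        (\<forall>x\<in>A. \<forall>y\<in>A. s i j (meet x y) = meet (s i j x) (s i j y)) \<and>
        (\<forall>x\<in>A. s i j (compl x) = compl (s i j x))) \<and>
     (\<forall>w1 w2. valid_word n w1 \<and> valid_word n w2 \<and> word_perm w1 = word_perm w2 \<longrightarrow>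
        (\<forall>x\<in>A. word_app s w1 x = word_app s w2 x))"

(* V \<subseteq> ^n U, sequences represented as extensional functions on {0..<n} *)
definition permutable :: "nat \<Rightarrow> (nat \<Rightarrow> 'u) set \<Rightarrow> bool" where
  "permutable n V \<longleftrightarrow> (\<forall>q\<in>V. \<forall>i<n. \<forall>j<n. i \<noteq> j \<longrightarrow> q \<circ> transpose i j \<in> V)"

definition hom_to_wp :: "nat \<Rightarrow> 'a set \<Rightarrow> ('a \<Rightarrow> 'a \<Rightarrow> 'a) \<Rightarrow> ('a \<Rightarrow> 'a) \<Rightarrow> (nat \<Rightarrow> nat \<Rightarrow> 'a \<Rightarrow> 'a)
    \<Rightarrow> (nat \<Rightarrow> 'u) set \<Rightarrow> ('a \<Rightarrow> (nat \<Rightarrow> 'u) set) \<Rightarrow> bool" where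
  "hom_to_wp n A meet compl s V h \<longleftrightarrow>
     (\<forall>x\<in>A. h x \<subseteq> V) \<and>
     (\<forall>x\<in>A. \<forall>y\<in>A. h (meet x y) = h x \<inter> h y) \<and>
     (\<forall>x\<in>A. h (compl x) = V - h x) \<and>
     (\<forall>i<n. \<forall>j<n. i \<noteq> j \<longrightarrow>
        (\<forall>x\<in>A. h (s i j x) = {q\<in>V. q \<circ> transpose i j \<in> h x}))"

end

theory Submission
  imports Defs
begin

text \<open>
  By the Boolean part of the axioms and a step-by-step enumeration of the countable algebra,
  every nonzero element lies in a two-valued homomorphism (an ultrafilter).  Each word in
  the \<open>s\<^sub>i\<^sub>j\<close> acts as an automorphism, and by the coherence equations only its
  permutation matters, so the words yield finitely many automorphisms \<open>s\<^sub>q\<close>, one for each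
  \<open>q \<in> S\<^sub>n\<close>, each of which preserves \<open>\<Prod>X = 0\<close>.  Refining \<open>a\<close> finitely often gives a nonzero
  \<open>d \<le> a\<close> lying below \<open>-s\<^sub>q x\<^sub>q\<close> for some \<open>x\<^sub>q \<in> X\<close>, for every \<open>q\<close>.  With an ultrafilter \<open>f\<close>
  containing \<open>d\<close>, the map \<open>h x = {q \<in> S\<^sub>n. f (s\<^sub>q x)}\<close> is the required homomorphism.
\<close>

text \<open>
  Huntington's axioms for operations made total by first applying a retraction \<open>r\<close> onto the
  carrier; this lets the equational derivations below run without carrier side conditions.
\<close>
locale huntington_retract =
  fixes r :: "'a \<Rightarrow> 'a" and m :: "'a \<Rightarrow> 'a \<Rightarrow> 'a" and c :: "'a \<Rightarrow> 'a"
  assumes comm: "m x y = m y x"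
    and assoc: "m (m x y) z = m x (m y z)"
    and huntington: "m (c (m (c x) y)) (c (m (c x) (c y))) = r x"
    and retract_meet: "r (m x y) = m x y" and retract_compl: "r (c x) = c x"
    and meet_retract: "m (r x) y = m x y" and compl_retract: "c (r x) = c x"
begin

lemma left_commute: "m x (m y z) = m y (m x z)"
  by (metis assoc comm)

lemma compl_compl: "c (c x) = r x"
proof -
  have f1: "\<forall>x y. m y (r x) = m x y"
    using comm meet_retract by presburger
  have f2: "\<forall>x y z. m (c (m (c x) y)) (m (c (m (c x) (c y))) z) = m x z"
    by (metis assoc huntington meet_retract)
  have f4: "\<forall>x y. m x (c (m (c x) (c (c y)))) = m x (c (m (c x) y))"
    using f2 f1 by (metis (no_types) huntington)
  have f5: "\<forall>x y. m (c (m x (c y))) (c (m (c y) (c x))) = r y"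
    using f1 by (metis compl_retract huntington)
  have f6: "\<forall>x y z. m x (m y (c (m (c x) (c (c z))))) = m y (m x (c (m (c x) z)))"
    using f4 left_commute by metis
  have f7: "\<forall>x y. m (c (m x (c y))) (c (m (c x) (c y))) = r y"
    using f5 comm by auto
  have "\<forall>x y z. m z (m y x) = m y (m x z)"
    using f1 by (metis (no_types) assoc retract_meet)
  then have "\<forall>x y. m x (m (c (m (c x) y)) (c (m x (c (c y))))) = m x (c y)"
    using f7 f6 by (metis retract_compl)
  then have "\<forall>x. m (c x) (c (c x)) = m x (c x)"
    using f5 f1 by (metis (no_types))
  then have "\<forall>x. m (c (m x (c x))) (c (m x (c (c x)))) = c x"
    using f7 by (metis comm retract_compl)
  then show ?thesis
    by (metis (no_types) huntington)
qed

lemma meet_compl_const: "m x (c x) = m y (c y)"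
proof -
  have f1: "\<forall>x y. m (c (m y x)) (c (m y (c x))) = c y"
    by (metis (full_types) huntington compl_compl meet_retract retract_compl)
  have f2: "\<forall>x y. m y (c (c x)) = m x y"
    using comm compl_compl meet_retract by presburger
  have f4: "\<forall>x y. m (c (m x y)) (c (m (c x) y)) = c y"
    using f2 f1 by (simp add: comm compl_compl retract_compl)
  have f5: "\<forall>x y z. m (c (m z y)) (m x (c (m z (c y)))) = m x (c z)"
    using left_commute f1 by presburger
  have f6: "\<forall>x y. m (c (m y x)) (c (m (c x) y)) = c y"
    using f1 by (simp add: comm)
  then have "\<forall>x y. m x (c (m (c y) x)) = m y (c (m (c x) y))"
    using f5 f2 by (metis (no_types))
  then show ?thesis
    using f6 f4 left_commute by (metis (no_types))
qed

lemma meet_idem: "m x x = r x"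
  by (smt (verit) assoc comm huntington compl_compl meet_retract retract_compl retract_meet)

lemma meet_bot: "m x (m y (c y)) = m y (c y)"
  by (metis (full_types) assoc meet_compl_const meet_idem meet_retract)

lemma meet_eq_of_meet_compl_eq_bot: "m x (c y) = m z (c z) \<Longrightarrow> m x y = r x"
  by (metis comm compl_retract huntington meet_compl_const compl_compl meet_idem meet_retract retract_meet)

end

locale boolean_carrier =
  fixes A :: "'a set" and meet :: "'a \<Rightarrow> 'a \<Rightarrow> 'a" and compl :: "'a \<Rightarrow> 'a"
  assumes boolean_alg: "boolean_alg A meet compl"
begin

lemma carrier_nonempty: "A \<noteq> {}"
  and meet_closed: "x \<in> A \<Longrightarrow> y \<in> A \<Longrightarrow> meet x y \<in> A"
  and compl_closed: "x \<in> A \<Longrightarrow> compl x \<in> A"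
  and meet_comm: "x \<in> A \<Longrightarrow> y \<in> A \<Longrightarrow> meet x y = meet y x"
  and meet_assoc: "x \<in> A \<Longrightarrow> y \<in> A \<Longrightarrow> z \<in> A \<Longrightarrow> meet (meet x y) z = meet x (meet y z)"
  and huntington:
    "x \<in> A \<Longrightarrow> y \<in> A \<Longrightarrow> meet (compl (meet (compl x) y)) (compl (meet (compl x) (compl y))) = x"
  using boolean_alg unfolding boolean_alg_def by blast+

definition retract :: "'a \<Rightarrow> 'a" where
  "retract x = (if x \<in> A then x else (SOME y. y \<in> A))"

lemma retract_closed: "retract x \<in> A"
  using carrier_nonempty by (simp add: retract_def some_in_eq)

lemma retract_id: "x \<in> A \<Longrightarrow> retract x = x"
  by (simp add: retract_def)

interpretation total: huntington_retract retract
  "\<lambda>x y. meet (retract x) (retract y)" "\<lambda>x. compl (retract x)"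
  by unfold_locales
    (simp_all add: retract_closed retract_id meet_closed compl_closed meet_assoc huntington
      meet_comm[OF retract_closed retract_closed])

abbreviation zeroA :: 'a where
  "zeroA \<equiv> ba_zero A meet compl"

lemma meet_compl_eq_zero: "x \<in> A \<Longrightarrow> meet x (compl x) = zeroA"
proof -
  assume x: "x \<in> A"
  have const: "meet y (compl y) = meet x (compl x)" if "y \<in> A" for y
    using total.meet_compl_const[of y x] x that by (simp add: retract_id compl_closed)
  have "\<exists>y\<in>A. zeroA = meet y (compl y)"
    unfolding ba_zero_def by (rule someI_ex) (use x in blast)
  then show ?thesis using const by metis
qed

lemma zero_closed: "zeroA \<in> A"
  using carrier_nonempty meet_compl_eq_zero meet_closed compl_closed by fastforce

lemma meet_idem: "x \<in> A \<Longrightarrow> meet x x = x"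
  using total.meet_idem[of x] by (simp add: retract_id)

lemma compl_compl: "x \<in> A \<Longrightarrow> compl (compl x) = x"
  using total.compl_compl[of x] by (simp add: retract_id compl_closed)

lemma meet_zero: "x \<in> A \<Longrightarrow> meet x zeroA = zeroA"
  using total.meet_bot[of x x] meet_compl_eq_zero
  by (simp add: retract_id compl_closed meet_closed zero_closed)

lemma le_of_meet_compl_eq_zero:
  assumes "x \<in> A" "y \<in> A" "meet x (compl y) = zeroA"
  shows "ba_le meet x y"
  using total.meet_eq_of_meet_compl_eq_bot[of x y x] assms meet_compl_eq_zero
  by (simp add: ba_le_def retract_id compl_closed)

lemma ba_le_refl: "x \<in> A \<Longrightarrow> ba_le meet x x"
  by (simp add: ba_le_def meet_idem)

lemma ba_le_trans:
  assumes "x \<in> A" "y \<in> A" "w \<in> A" "ba_le meet x y" "ba_le meet y w"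
  shows "ba_le meet x w"
proof -
  have "meet x w = meet (meet x y) w" using assms(4) by (simp add: ba_le_def)
  also have "\<dots> = meet x (meet y w)" using assms(1-3) by (rule meet_assoc)
  also have "\<dots> = x" using assms(4,5) by (simp add: ba_le_def)
  finally show ?thesis by (simp add: ba_le_def)
qed

lemma meet_le_right: "x \<in> A \<Longrightarrow> y \<in> A \<Longrightarrow> ba_le meet (meet x y) y"
  by (simp add: ba_le_def meet_assoc meet_idem)

lemma meet_le_left: "x \<in> A \<Longrightarrow> y \<in> A \<Longrightarrow> ba_le meet (meet x y) x"
  using meet_le_right[of y x] by (simp add: meet_comm)

lemma le_meetI:
  assumes "w \<in> A" "x \<in> A" "y \<in> A" "ba_le meet w x" "ba_le meet w y"
  shows "ba_le meet w (meet x y)"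
  using assms meet_assoc[of w x y] by (simp add: ba_le_def)

lemma inf_is_zero_meet_compl_nonzero:
  assumes "Y \<subseteq> A" "inf_is_zero A meet compl Y" "d \<in> A" "d \<noteq> zeroA"
  shows "\<exists>y\<in>Y. meet d (compl y) \<noteq> zeroA"
  using assms le_of_meet_compl_eq_zero unfolding inf_is_zero_def by blast

lemma refine_below_inf_is_zero_family:
  assumes "finite Q" and "\<And>Y. Y \<in> Q \<Longrightarrow> Y \<subseteq> A \<and> inf_is_zero A meet compl Y"
    and "c \<in> A" "c \<noteq> zeroA"
  shows "\<exists>d\<in>A. d \<noteq> zeroA \<and> ba_le meet d c \<and> (\<forall>Y\<in>Q. \<exists>y\<in>Y. ba_le meet d (compl y))"
  using assms(1,2)
proof (induction Q rule: finite_induct)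
  case empty
  then show ?case using assms(3,4) ba_le_refl by blast
next
  case (insert Y Q)
  have Y: "Y \<subseteq> A" "inf_is_zero A meet compl Y"
    and family: "\<And>Y'. Y' \<in> Q \<Longrightarrow> Y' \<subseteq> A \<and> inf_is_zero A meet compl Y'"
    using insert.prems by blast+
  obtain d where d: "d \<in> A" "d \<noteq> zeroA" "ba_le meet d c"
    and below_Q: "\<forall>Y'\<in>Q. \<exists>y\<in>Y'. ba_le meet d (compl y)"
    using insert.IH[OF family] by blast
  obtain y where y: "y \<in> Y" "meet d (compl y) \<noteq> zeroA"
    using inf_is_zero_meet_compl_nonzero[OF Y d(1,2)] by blast
  define d' where "d' = meet d (compl y)"
  have compl_y: "compl y \<in> A" using Y(1) y(1) compl_closed by blast
  have d': "d' \<in> A" "d' \<noteq> zeroA" "ba_le meet d' d" "ba_le meet d' (compl y)"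
    unfolding d'_def using d(1) compl_y y(2) meet_closed meet_le_left meet_le_right by auto
  have "\<exists>y\<in>Y'. ba_le meet d' (compl y)" if Y': "Y' \<in> Q" for Y'
  proof -
    obtain y' where y': "y' \<in> Y'" "ba_le meet d (compl y')"
      using below_Q Y' by blast
    have "compl y' \<in> A" using family[OF Y'] y'(1) compl_closed by blast
    then show ?thesis using y'(1) ba_le_trans[OF d'(1) d(1) _ d'(3) y'(2)] by blast
  qed
  then have "\<forall>Y'\<in>insert Y Q. \<exists>y\<in>Y'. ba_le meet d' (compl y)"
    using y(1) d'(4) by auto
  moreover have "ba_le meet d' c" using ba_le_trans[OF d'(1) d(1) assms(3) d'(3) d(3)] .
  ultimately show ?case using d'(1,2) by blast
qed

definition two_valued_hom :: "('a \<Rightarrow> bool) \<Rightarrow> bool" where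
  "two_valued_hom f \<longleftrightarrow>
     (\<forall>x\<in>A. \<forall>y\<in>A. f (meet x y) = (f x \<and> f y)) \<and> (\<forall>x\<in>A. f (compl x) = (\<not> f x))"

lemma two_valued_hom_mono:
  "two_valued_hom f \<Longrightarrow> x \<in> A \<Longrightarrow> y \<in> A \<Longrightarrow> ba_le meet x y \<Longrightarrow> f x \<Longrightarrow> f y"
  unfolding two_valued_hom_def ba_le_def by metis

definition ultra_chain :: "'a \<Rightarrow> nat \<Rightarrow> 'a" where
  "ultra_chain c = rec_nat c (\<lambda>k d.
     if meet d (from_nat_into A k) \<noteq> zeroA then meet d (from_nat_into A k)
     else meet d (compl (from_nat_into A k)))"

lemma ultra_chain_0: "ultra_chain c 0 = c"
  by (simp add: ultra_chain_def)

lemma ultra_chain_Suc: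
  "ultra_chain c (Suc k) =
     (if meet (ultra_chain c k) (from_nat_into A k) \<noteq> zeroA
      then meet (ultra_chain c k) (from_nat_into A k)
      else meet (ultra_chain c k) (compl (from_nat_into A k)))"
  by (simp add: ultra_chain_def)
context
  fixes c :: 'a
  assumes c: "c \<in> A" "c \<noteq> zeroA"
begin


lemma ultra_chain_nonzero: "ultra_chain c k \<in> A \<and> ultra_chain c k \<noteq> zeroA"
proof (induction k)
  case 0
  then show ?case using c by (simp add: ultra_chain_0)
next
  case (Suc k)
  let ?d = "ultra_chain c k" and ?b = "from_nat_into A k"
  have b: "?b \<in> A" using carrier_nonempty by (rule from_nat_into)
  have "meet ?d (compl ?b) \<noteq> zeroA" if "meet ?d ?b = zeroA"
    using le_of_meet_compl_eq_zero[of ?d ?b] Suc.IH b that by (auto simp: ba_le_def)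
  then show ?case
    using Suc.IH b by (simp add: ultra_chain_Suc meet_closed compl_closed)
qed

lemma ultra_chain_closed: "ultra_chain c k \<in> A"
  using ultra_chain_nonzero by blast

lemma ultra_chain_decides:
  "ba_le meet (ultra_chain c (Suc k)) (from_nat_into A k) \<or>
   ba_le meet (ultra_chain c (Suc k)) (compl (from_nat_into A k))"
  using carrier_nonempty ultra_chain_closed
  by (simp add: ultra_chain_Suc meet_le_right from_nat_into compl_closed)

lemma ultra_chain_antimono: "m \<le> k \<Longrightarrow> ba_le meet (ultra_chain c k) (ultra_chain c m)"
proof (induction k rule: dec_induct)
  case base
  then show ?case using ba_le_refl ultra_chain_closed by blast
next
  case (step k)
  have "ba_le meet (ultra_chain c (Suc k)) (ultra_chain c k)"
    using carrier_nonempty ultra_chain_closed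
    by (simp add: ultra_chain_Suc meet_le_left from_nat_into compl_closed)
  then show ?case using step.IH ba_le_trans ultra_chain_closed by blast
qed

end

lemma countable_two_valued_hom_exists:
  assumes "countable A" "c \<in> A" "c \<noteq> zeroA"
  shows "\<exists>f. two_valued_hom f \<and> f c"
proof -
  note chain = ultra_chain_closed[OF assms(2,3)] ultra_chain_nonzero[OF assms(2,3)]
  define f where "f x \<longleftrightarrow> (\<exists>k. ba_le meet (ultra_chain c k) x)" for x
  have up: "f y" if "f x" "x \<in> A" "y \<in> A" "ba_le meet x y" for x y
    using that ba_le_trans chain(1) unfolding f_def by blast
  have meet: "f (meet x y) \<longleftrightarrow> f x \<and> f y" if xy: "x \<in> A" "y \<in> A" for x y
  proof
    assume "f (meet x y)"
    then show "f x \<and> f y" using up xy meet_closed meet_le_left meet_le_right by blast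
  next
    assume "f x \<and> f y"
    then obtain k l where "ba_le meet (ultra_chain c k) x" "ba_le meet (ultra_chain c l) y"
      unfolding f_def by blast
    moreover have "ba_le meet (ultra_chain c (max k l)) (ultra_chain c k)"
      and "ba_le meet (ultra_chain c (max k l)) (ultra_chain c l)"
      by (simp_all add: ultra_chain_antimono assms(2,3))
    ultimately show "f (meet x y)"
      unfolding f_def using ba_le_trans le_meetI chain(1) xy by metis
  qed
  have compl: "f (compl x) \<longleftrightarrow> \<not> f x" if x: "x \<in> A" for x
  proof -
    obtain k where "from_nat_into A k = x" using from_nat_into_surj[OF assms(1) x] by blast
    then have "f x \<or> f (compl x)"
      using ultra_chain_decides[OF assms(2,3), of k] unfolding f_def by blast
    moreover have "\<not> f zeroA"
      using chain meet_zero unfolding f_def ba_le_def by metis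
    ultimately show ?thesis
      using meet[OF x compl_closed[OF x]] meet_compl_eq_zero[OF x] by auto
  qed
  have "f c" using ba_le_refl assms(2) ultra_chain_0 unfolding f_def by metis
  then show ?thesis using meet compl unfolding two_valued_hom_def by blast
qed

end

lemma restrict_comp_transpose:
  fixes n :: nat
  assumes "i < n" "j < n"
  shows "restrict p {0..<n} \<circ> transpose i j = restrict (p \<circ> transpose i j) {0..<n}"
proof
  fix k
  have "transpose i j k < n \<longleftrightarrow> k < n" using assms by (auto simp: transpose_def)
  then show "(restrict p {0..<n} \<circ> transpose i j) k = restrict (p \<circ> transpose i j) {0..<n} k"
    using assms by (auto simp: transpose_def)
qed

lemma valid_word_Nil [simp]: "valid_word n []"
  and valid_word_Cons [simp]:
    "valid_word n ((i, j) # w) \<longleftrightarrow> i \<noteq> j \<and> i < n \<and> j < n \<and> valid_word n w"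
  and valid_word_append [simp]: "valid_word n (w @ v) \<longleftrightarrow> valid_word n w \<and> valid_word n v"
  and valid_word_rev [simp]: "valid_word n (rev w) \<longleftrightarrow> valid_word n w"
  by (auto simp: valid_word_def)

lemma word_app_Nil [simp]: "word_app s [] x = x"
  and word_app_Cons [simp]: "word_app s ((i, j) # w) x = s i j (word_app s w x)"
  and word_app_append: "word_app s (w @ v) x = word_app s w (word_app s v x)"
  by (simp_all add: word_app_def)

lemma word_perm_Nil [simp]: "word_perm [] = id"
  and word_perm_Cons [simp]: "word_perm ((i, j) # w) = transpose i j \<circ> word_perm w"
  by (simp_all add: word_perm_def)

lemma word_perm_append: "word_perm (w @ v) = word_perm w \<circ> word_perm v"
  by (induction w) (auto simp: comp_assoc)

lemma word_perm_rev_comp: "word_perm (rev w) \<circ> word_perm w = id"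
proof (induction w)
  case (Cons p w)
  obtain i j where p: "p = (i, j)" by (cases p)
  have "word_perm (rev (p # w)) \<circ> word_perm (p # w)
      = word_perm (rev w) \<circ> (transpose i j \<circ> transpose i j) \<circ> word_perm w"
    by (simp add: p word_perm_append fun_eq_iff)
  also have "\<dots> = id" by (simp only: transpose_comp_involutory comp_id Cons.IH)
  finally show ?case .
qed simp

lemma word_perm_fixes: "valid_word n w \<Longrightarrow> n \<le> k \<Longrightarrow> word_perm w k = k"
  by (induction w) auto

lemma word_perm_less: "valid_word n w \<Longrightarrow> k < n \<Longrightarrow> word_perm w k < n"
  by (induction w) (auto simp: transpose_def)

locale ta_carrier =
  fixes n :: nat and A :: "'a set" and meet :: "'a \<Rightarrow> 'a \<Rightarrow> 'a" and compl :: "'a \<Rightarrow> 'a"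
    and s :: "nat \<Rightarrow> nat \<Rightarrow> 'a \<Rightarrow> 'a"
  assumes TA: "TA n A meet compl s"
begin

sublocale boolean_carrier A meet compl
  using TA unfolding TA_def by unfold_locales blast

lemma s_closed: "i < n \<Longrightarrow> j < n \<Longrightarrow> i \<noteq> j \<Longrightarrow> x \<in> A \<Longrightarrow> s i j x \<in> A"
  and s_meet: "i < n \<Longrightarrow> j < n \<Longrightarrow> i \<noteq> j \<Longrightarrow> x \<in> A \<Longrightarrow> y \<in> A \<Longrightarrow>
    s i j (meet x y) = meet (s i j x) (s i j y)"
  and s_compl: "i < n \<Longrightarrow> j < n \<Longrightarrow> i \<noteq> j \<Longrightarrow> x \<in> A \<Longrightarrow> s i j (compl x) = compl (s i j x)"
  and word_app_eq_of_word_perm_eq: "valid_word n w \<Longrightarrow> valid_word n v \<Longrightarrow>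
    word_perm w = word_perm v \<Longrightarrow> x \<in> A \<Longrightarrow> word_app s w x = word_app s v x"
  using TA unfolding TA_def by blast+

lemma word_app_closed: "valid_word n w \<Longrightarrow> x \<in> A \<Longrightarrow> word_app s w x \<in> A"
  by (induction w) (auto simp: s_closed)

lemma word_app_meet:
  "valid_word n w \<Longrightarrow> x \<in> A \<Longrightarrow> y \<in> A \<Longrightarrow>
    word_app s w (meet x y) = meet (word_app s w x) (word_app s w y)"
  by (induction w) (auto simp: s_meet word_app_closed)

lemma word_app_compl:
  "valid_word n w \<Longrightarrow> x \<in> A \<Longrightarrow> word_app s w (compl x) = compl (word_app s w x)"
  by (induction w) (auto simp: s_compl word_app_closed)

lemma word_app_rev: "valid_word n w \<Longrightarrow> x \<in> A \<Longrightarrow> word_app s (rev w) (word_app s w x) = x"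
  using word_app_eq_of_word_perm_eq[of "rev w @ w" "[]" x]
  by (simp add: word_app_append word_perm_append word_perm_rev_comp)

lemma word_app_zero: "valid_word n w \<Longrightarrow> word_app s w zeroA = zeroA"
  using carrier_nonempty meet_compl_eq_zero word_app_meet word_app_compl word_app_closed compl_closed
  by (metis ex_in_conv)

lemma inf_is_zero_word_image:
  assumes X: "X \<subseteq> A" "inf_is_zero A meet compl X" and w: "valid_word n w"
  shows "inf_is_zero A meet compl (word_app s w ` X)"
  unfolding inf_is_zero_def
proof (intro ballI impI)
  fix e assume e: "e \<in> A" and below: "\<forall>y\<in>word_app s w ` X. ba_le meet e y"
  let ?e' = "word_app s (rev w) e"
  have "ba_le meet ?e' x" if x: "x \<in> X" for x
  proof -
    have "meet e (word_app s w x) = e" using below x unfolding ba_le_def by blast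
    then have "word_app s (rev w) (meet e (word_app s w x)) = ?e'" by simp
    then show ?thesis
      using x X(1) w e by (auto simp: ba_le_def word_app_meet word_app_closed word_app_rev)
  qed
  then have "?e' = zeroA" using X(2) e w word_app_closed unfolding inf_is_zero_def by simp
  then show "e = zeroA" using word_app_rev[of "rev w" e] w e word_app_zero by simp
qed

definition word_seq :: "(nat \<times> nat) list \<Rightarrow> nat \<Rightarrow> nat" where
  "word_seq w = restrict (word_perm w) {0..<n}"

text \<open>\<open>S\<^sub>n\<close>, each permutation given as the extensional sequence of its values on \<open>{0..<n}\<close>.\<close>
definition perm_seqs :: "(nat \<Rightarrow> nat) set" where
  "perm_seqs = word_seq ` {w. valid_word n w}"

lemma word_seq_in_perm_seqs [simp]: "valid_word n w \<Longrightarrow> word_seq w \<in> perm_seqs"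
  by (simp add: perm_seqs_def)

lemma word_app_eq_of_word_seq_eq:
  assumes "valid_word n w" "valid_word n v" "word_seq w = word_seq v" "x \<in> A"
  shows "word_app s w x = word_app s v x"
proof (rule word_app_eq_of_word_perm_eq[OF assms(1,2) _ assms(4)])
  show "word_perm w = word_perm v"
  proof
    fix k
    show "word_perm w k = word_perm v k"
      using fun_cong[OF assms(3)[unfolded word_seq_def], of k] assms(1,2) word_perm_fixes
      by (cases "k < n") auto
  qed
qed

lemma word_seq_snoc:
  "i < n \<Longrightarrow> j < n \<Longrightarrow> word_seq (w @ [(i, j)]) = word_seq w \<circ> transpose i j"
  by (simp add: word_seq_def word_perm_append restrict_comp_transpose)

lemma permutable_perm_seqs: "permutable n perm_seqs"
  unfolding permutable_def perm_seqs_def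
  by (auto simp flip: word_seq_snoc intro!: imageI)

lemma perm_seqs_subset: "perm_seqs \<subseteq> {0..<n} \<rightarrow>\<^sub>E {0..<n}"
  by (auto simp: perm_seqs_def word_seq_def word_perm_less)

lemma finite_perm_seqs: "finite perm_seqs"
  by (rule finite_subset[OF perm_seqs_subset]) (simp add: finite_PiE)

lemma perm_seqs_eqI:
  assumes "P \<subseteq> perm_seqs" "Q \<subseteq> perm_seqs"
    and "\<And>w. valid_word n w \<Longrightarrow> word_seq w \<in> P \<longleftrightarrow> word_seq w \<in> Q"
  shows "P = Q"
  using assms unfolding perm_seqs_def by blast

definition rep :: "('a \<Rightarrow> bool) \<Rightarrow> 'a \<Rightarrow> (nat \<Rightarrow> nat) set" where
  "rep f x = {word_seq w | w. valid_word n w \<and> f (word_app s w x)}"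

lemma rep_subset: "rep f x \<subseteq> perm_seqs"
  by (auto simp: rep_def perm_seqs_def)

lemma word_seq_in_rep_iff:
  assumes "valid_word n w" "x \<in> A"
  shows "word_seq w \<in> rep f x \<longleftrightarrow> f (word_app s w x)"
proof
  assume "word_seq w \<in> rep f x"
  then obtain v where "valid_word n v" "word_seq w = word_seq v" "f (word_app s v x)"
    unfolding rep_def by auto
  then show "f (word_app s w x)" using word_app_eq_of_word_seq_eq assms by metis
qed (use assms in \<open>auto simp: rep_def\<close>)

lemma hom_to_wp_rep:
  assumes f: "two_valued_hom f"
  shows "hom_to_wp n A meet compl s perm_seqs (rep f)"
  unfolding hom_to_wp_def
proof (intro conjI ballI allI impI)
  fix x assume "x \<in> A"
  show "rep f x \<subseteq> perm_seqs" by (rule rep_subset)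
next
  fix x y assume "x \<in> A" "y \<in> A"
  then show "rep f (meet x y) = rep f x \<inter> rep f y"
    using f rep_subset
    by (intro perm_seqs_eqI) (auto simp: word_seq_in_rep_iff word_app_meet word_app_closed
        meet_closed two_valued_hom_def)
next
  fix x assume "x \<in> A"
  then show "rep f (compl x) = perm_seqs - rep f x"
    using f rep_subset
    by (intro perm_seqs_eqI) (auto simp: word_seq_in_rep_iff word_app_compl word_app_closed
        compl_closed two_valued_hom_def)
next
  fix i j x assume ij: "i < n" "j < n" "i \<noteq> j" and x: "x \<in> A"
  have "word_seq w \<in> rep f (s i j x) \<longleftrightarrow> word_seq w \<circ> transpose i j \<in> rep f x"
    if "valid_word n w" for w
    using that ij x
    by (simp add: word_seq_in_rep_iff s_closed flip: word_seq_snoc) (simp add: word_app_append)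
  then show "rep f (s i j x) = {q \<in> perm_seqs. q \<circ> transpose i j \<in> rep f x}"
    using rep_subset by (intro perm_seqs_eqI) auto
qed

end

theorem theorem3p18:
  fixes n :: nat and A :: "'a set" and meet :: "'a \<Rightarrow> 'a \<Rightarrow> 'a" and compl :: "'a \<Rightarrow> 'a"
    and s :: "nat \<Rightarrow> nat \<Rightarrow> 'a \<Rightarrow> 'a" and a :: 'a and X :: "'a set"
  assumes "n \<ge> 2"
    and "TA n A meet compl s"
    and "countable A"
    and "a \<in> A" and "a \<noteq> ba_zero A meet compl"
    and "X \<subseteq> A" and "inf_is_zero A meet compl X"
  shows "\<exists>(U::nat set) (V::(nat \<Rightarrow> nat) set) h.
           V \<subseteq> ({0..<n} \<rightarrow>\<^sub>E U) \<and> permutable n V \<and>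
           hom_to_wp n A meet compl s V h \<and>
           h a \<noteq> {} \<and> (\<Inter>x\<in>X. h x) = {}"
proof -
  interpret ta_carrier n A meet compl s by (rule ta_carrier.intro) (fact assms(2))
  obtain W where W: "W \<subseteq> {w. valid_word n w}" "finite W" "perm_seqs = word_seq ` W"
    using finite_subset_image[OF finite_perm_seqs, of word_seq "{w. valid_word n w}"]
    by (auto simp: perm_seqs_def)
  have family: "Y \<subseteq> A \<and> inf_is_zero A meet compl Y" if "Y \<in> (\<lambda>w. word_app s w ` X) ` W" for Y
    using that W(1) assms(6,7) inf_is_zero_word_image word_app_closed by blast
  obtain d where d: "d \<in> A" "d \<noteq> zeroA" "ba_le meet d a"
    and below: "\<forall>Y\<in>(\<lambda>w. word_app s w ` X) ` W. \<exists>y\<in>Y. ba_le meet d (compl y)"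
    using refine_below_inf_is_zero_family[OF finite_imageI[OF W(2)] family assms(4,5)] by blast
  obtain f where f: "two_valued_hom f" "f d"
    using countable_two_valued_hom_exists assms(3) d by blast
  have "word_seq [] \<in> rep f a"
    using two_valued_hom_mono[OF f(1) d(1) assms(4) d(3) f(2)] assms(4) word_seq_in_rep_iff by simp
  moreover have "q \<notin> (\<Inter>x\<in>X. rep f x)" for q
  proof (cases "q \<in> perm_seqs")
    case True
    then obtain w where w: "w \<in> W" "q = word_seq w" using W(3) by blast
    then obtain x where x: "x \<in> X" "ba_le meet d (compl (word_app s w x))"
      using below by blast
    have wx: "word_app s w x \<in> A" using w W(1) x assms(6) word_app_closed by blast
    have "f (compl (word_app s w x))"
      using two_valued_hom_mono[OF f(1) d(1) compl_closed[OF wx] x(2) f(2)] .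
    then have "\<not> f (word_app s w x)" using f(1) wx unfolding two_valued_hom_def by blast
    moreover have "valid_word n w" "x \<in> A" using w W(1) x(1) assms(6) by auto
    ultimately have "q \<notin> rep f x" using w(2) word_seq_in_rep_iff by simp
    then show ?thesis using x(1) by blast
  next
    case False
    have "X \<noteq> {}" using assms(4,5,7) unfolding inf_is_zero_def by blast
    then show ?thesis using False rep_subset by blast
  qed
  ultimately show ?thesis
    using perm_seqs_subset permutable_perm_seqs hom_to_wp_rep[OF f(1)] by blast
qed

end
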